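(* Consider the noisy group testing model in the context with $K>1$ and $p=\frac{1}{(1-u)K}$, and let $\gamma_0=\frac{u}{1-(1-u)p}$. Let $c_0>0$ be any constant. There exist absolute constants $C_{a1},C_{a2}>0$, independent of $N$, $L$ and $K$, such that if $$M\ \ge\ (1+c_0)\,\frac{K(1-u)}{(1-q)(1-\gamma_0)^2}\left(\frac{C_{a1}\log\left[K\binom{N-K}{L-1}\right]}{(N-K)-(L-1)}+C_{a2}\log K\right),$$ then, for a given defective set $S_d$, the algorithm RoLpAl outputs $L$ non-defective items with probability exceeding $1-\exp\left(-c_0\log\left(K\binom{N-K}{L-1}\right)\right)-\exp(-c_0\log K)$.
   Context: Group testing model: $N$ items indexed by $[N]$; a fixed defective set $S_d\subset[N]$ with $|S_d|=K$; $1\le L\le N-K$. Parameters $p\in(0,1)$, $u\in[0,1/2)$, $q\in[0,1/2)$. The test matrix $\mathbf{X}\in\{0,1\}^{M\times N}$ has i.i.d. Bernoulli($p$) entries $X_{lk}$; independently, $D_{lk}\sim\mathrm{Bernoulli}(1-u)$ i.i.d. and $W_l\sim\mathrm{Bernoulli}(q)$ i.i.d.; outcomes $Y_l=\left(\bigvee_{k\in S_d}D_{lk}X_{lk}\right)\vee W_l$ ($\vee$ = boolean OR). Logarithms are natural. Let $Y_z=\{l:Y_l=0\}$, $M_z=|Y_z|$, and $\mathbf{X}(Y_z,:)$ the submatrix of rows of $\mathbf{X}$ indexed by $Y_z$. $\underline{1}_n,\underline{0}_n$ are all-ones/all-zeros vectors and $\preccurlyeq$ is componentwise inequality. LP0: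 minimize $\underline{1}_{M_z}^T\underline{\eta}_z$ over $\underline{z}\in\mathbb{R}^N,\underline{\eta}_z\in\mathbb{R}^{M_z}$ subject to $\mathbf{X}(Y_z,:)(\underline{1}_N-\underline{z})-\underline{\eta}_z=\underline{0}_{M_z}$, $\underline{0}_N\preccurlyeq\underline{z}\preccurlyeq\underline{1}_N$, $\underline{\eta}_z\succcurlyeq\underline{0}_{M_z}$, $\underline{1}_N^T\underline{z}\le L$. Algorithm RoLpAl: solve LP0, obtaining an optimal $\hat{\underline{z}}$; output a set of $L$ items indexed by the $L$ largest entries of $\hat{\underline{z}}$ (ties arbitrary). Success means the output set is disjoint from $S_d$. *)

theory Defs
  imports "HOL-Probability.Probability"
begin

text \<open>Noisy group testing model. Items are 0..<N, tests (rows) are 0..<M.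
  X (l,k) : test matrix entry, D (l,k) : dilution variable, W l : additive noise.\<close>

type_synonym sample = "((nat \<times> nat) \<Rightarrow> bool) \<times> ((nat \<times> nat) \<Rightarrow> bool) \<times> (nat \<Rightarrow> bool)"

definition gt_pmf :: "nat \<Rightarrow> nat \<Rightarrow> real \<Rightarrow> real \<Rightarrow> real \<Rightarrow> sample pmf" where
  "gt_pmf M N p u q =
     pair_pmf (Pi_pmf ({0..<M} \<times> {0..<N}) False (\<lambda>_. bernoulli_pmf p))
      (pair_pmf (Pi_pmf ({0..<M} \<times> {0..<N}) False (\<lambda>_. bernoulli_pmf (1 - u)))
                (Pi_pmf {0..<M} False (\<lambda>_. bernoulli_pmf q)))"

definition outcome :: "nat set \<Rightarrow> sample \<Rightarrow> nat \<Rightarrow> bool" where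
  "outcome Sd \<omega> l = (case \<omega> of (X, D, W) \<Rightarrow> (\<exists>k\<in>Sd. D (l, k) \<and> X (l, k)) \<or> W l)"

definition zero_tests :: "nat \<Rightarrow> nat set \<Rightarrow> sample \<Rightarrow> nat set" where
  "zero_tests M Sd \<omega> = {l \<in> {0..<M}. \<not> outcome Sd \<omega> l}"

definition ind :: "bool \<Rightarrow> real" where "ind b = (if b then 1 else 0)"

definition lp0_feasible ::
  "nat \<Rightarrow> nat \<Rightarrow> ((nat \<times> nat) \<Rightarrow> bool) \<Rightarrow> nat set \<Rightarrow> (nat \<Rightarrow> real) \<Rightarrow> (nat \<Rightarrow> real) \<Rightarrow> bool" where
  "lp0_feasible N L X Yz z eta \<longleftrightarrow>
     (\<forall>l\<in>Yz. (\<Sum>k<N. ind (X (l, k)) * (1 - z k)) - eta l = 0) \<and>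
     (\<forall>k<N. 0 \<le> z k \<and> z k \<le> 1) \<and>
     (\<forall>l\<in>Yz. 0 \<le> eta l) \<and>
     (\<Sum>k<N. z k) \<le> real L"

definition lp0_objective :: "nat set \<Rightarrow> (nat \<Rightarrow> real) \<Rightarrow> real" where
  "lp0_objective Yz eta = (\<Sum>l\<in>Yz. eta l)"

definition lp0_optimal ::
  "nat \<Rightarrow> nat \<Rightarrow> ((nat \<times> nat) \<Rightarrow> bool) \<Rightarrow> nat set \<Rightarrow> (nat \<Rightarrow> real) \<Rightarrow> (nat \<Rightarrow> real) \<Rightarrow> bool" where
  "lp0_optimal N L X Yz z eta \<longleftrightarrow> lp0_feasible N L X Yz z eta \<and>
     (\<forall>z' eta'. lp0_feasible N L X Yz z' eta' \<longrightarrow> lp0_objective Yz eta \<le> lp0_objective Yz eta')"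

definition top_L :: "nat \<Rightarrow> nat \<Rightarrow> (nat \<Rightarrow> real) \<Rightarrow> nat set \<Rightarrow> bool" where
  "top_L N L z T \<longleftrightarrow> T \<subseteq> {0..<N} \<and> card T = L \<and>
     (\<forall>i\<in>T. \<forall>j\<in>{0..<N} - T. z j \<le> z i)"

definition rolpal_success :: "nat \<Rightarrow> nat \<Rightarrow> nat \<Rightarrow> nat set \<Rightarrow> sample \<Rightarrow> bool" where
  "rolpal_success M N L Sd \<omega> \<longleftrightarrow>
     (\<forall>z eta T. lp0_optimal N L (fst \<omega>) (zero_tests M Sd \<omega>) z eta \<longrightarrow> top_L N L z T \<longrightarrow> T \<inter> Sd = {})"

end

theory Submission
  imports Defs
begin

text \<open>LP0 minimises \<open>\<Sum>k. c k * (1 - z k)\<close>, where \<open>c k\<close> counts the negative tests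
  containing item \<open>k\<close>; so its optimal \<open>z\<close> maximise \<open>\<Sum>k. c k * z k\<close> over
  \<open>0 \<le> z \<le> 1\<close>, \<open>\<Sum>k. z k \<le> L\<close>. An exchange argument shows that if every defective item has
  count below a threshold \<open>\<tau>\<close> while at least \<open>L\<close> non-defective items reach it, every such
  maximiser vanishes on the defectives and any choice of its \<open>L\<close> largest entries avoids them.

  The tests are independent, so the counts are sums of \<open>M\<close> i.i.d. terms. For
  \<open>p = 1 / ((1 - u) K)\<close> a test is negative with probability \<open>(1 - 1/K)^K (1 - q) \<ge> e\<^sup>-\<^sup>2 (1 - q)\<close>,
  a non-defective item has expected count \<open>\<mu>\<close> and a defective one \<open>(1 - \<gamma>0) \<mu>\<close>. Chernoff
  bounds for the \<open>K\<close> defectives, and for each of the \<open>C(N - K, L - 1)\<close> sets of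
  \<open>(N - K) - (L - 1)\<close> non-defectives jointly with a lower bound on the number of negative tests,
  combined by a union bound, make the failure probability small once \<open>M\<close> satisfies the stated bound.\<close>

subsection \<open>Independence of the tests\<close>

lemma map_pair_Pi_pmf:
  assumes "finite A"
  shows "map_pmf (\<lambda>(f,g) i. (f i, g i)) (pair_pmf (Pi_pmf A a P) (Pi_pmf A b Q))
         = Pi_pmf A (a,b) (\<lambda>i. pair_pmf (P i) (Q i))"
proof (rule pmf_eqI)
  fix h :: "'a \<Rightarrow> 'b \<times> 'c"
  have inj: "inj ((\<lambda>(f,g) i. (f i, g i)) :: ('a \<Rightarrow> 'b) \<times> ('a \<Rightarrow> 'c) \<Rightarrow> _)"
    by (rule injI) (auto simp: fun_eq_iff)
  have h: "h = (\<lambda>(f,g) i. (f i, g i)) (fst \<circ> h, snd \<circ> h)" by (simp add: fun_eq_iff)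
  have pmf_pair_comp: "pmf (pair_pmf (P x) (Q x)) (h x) = pmf (P x) (fst (h x)) * pmf (Q x) (snd (h x))" for x
    by (cases "h x") (simp add: pmf_pair)
  have outside: "(\<forall>x. x \<notin> A \<longrightarrow> fst (h x) = a) \<and> (\<forall>x. x \<notin> A \<longrightarrow> snd (h x) = b)
        \<longleftrightarrow> (\<forall>x. x \<notin> A \<longrightarrow> h x = (a,b))" by (auto simp: prod_eq_iff)
  have "pmf (map_pmf (\<lambda>(f,g) i. (f i, g i)) (pair_pmf (Pi_pmf A a P) (Pi_pmf A b Q))) h
      = pmf (pair_pmf (Pi_pmf A a P) (Pi_pmf A b Q)) (fst \<circ> h, snd \<circ> h)"
    by (subst h, subst pmf_map_inj'[OF inj]) simp
  also have "\<dots> = pmf (Pi_pmf A (a,b) (\<lambda>i. pair_pmf (P i) (Q i))) h"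
    using assms outside by (auto simp: pmf_pair pmf_Pi prod.distrib pmf_pair_comp)
  finally show "pmf (map_pmf (\<lambda>(f,g) i. (f i, g i)) (pair_pmf (Pi_pmf A a P) (Pi_pmf A b Q))) h =
      pmf (Pi_pmf A (a,b) (\<lambda>i. pair_pmf (P i) (Q i))) h" .
qed

lemma map_curry_Pi_pmf:
  assumes A: "finite A" and B: "finite B"
  shows "map_pmf (\<lambda>f l k. f (l,k)) (Pi_pmf (A \<times> B) d P)
         = Pi_pmf A (\<lambda>_. d) (\<lambda>l. Pi_pmf B d (\<lambda>k. P (l,k)))"
proof (rule pmf_eqI)
  fix H :: "'a \<Rightarrow> 'b \<Rightarrow> 'c"
  have inj: "inj ((\<lambda>f l k. f (l,k)) :: ('a \<times> 'b \<Rightarrow> 'c) \<Rightarrow> _)"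
    by (rule injI) (auto simp: fun_eq_iff)
  have h: "H = (\<lambda>f l k. f (l,k)) (\<lambda>x. H (fst x) (snd x))" by (simp add: fun_eq_iff)
  have "pmf (map_pmf (\<lambda>f l k. f (l,k)) (Pi_pmf (A \<times> B) d P)) H
      = pmf (Pi_pmf (A \<times> B) d P) (\<lambda>x. H (fst x) (snd x))"
    by (subst h, subst pmf_map_inj'[OF inj]) simp
  also have "\<dots> = pmf (Pi_pmf A (\<lambda>_. d) (\<lambda>l. Pi_pmf B d (\<lambda>k. P (l,k)))) H"
  proof (cases "(\<forall>l. l \<notin> A \<longrightarrow> (\<forall>k. H l k = d)) \<and> (\<forall>l\<in>A. \<forall>k. k \<notin> B \<longrightarrow> H l k = d)")
    case True
    have "(\<Prod>x\<in>A \<times> B. pmf (P x) (H (fst x) (snd x))) = (\<Prod>l\<in>A. \<Prod>k\<in>B. pmf (P (l,k)) (H l k))"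
      by (simp add: prod.cartesian_product case_prod_unfold)
    moreover have "\<forall>l. l \<notin> A \<longrightarrow> H l = (\<lambda>_. d)" using True by auto
    ultimately show ?thesis using True A B by (auto simp: pmf_Pi finite_cartesian_product)
  next
    case False
    have "\<not> (\<forall>x. x \<notin> A \<times> B \<longrightarrow> H (fst x) (snd x) = d)" using False by auto
    then have lhs_zero: "pmf (Pi_pmf (A \<times> B) d P) (\<lambda>x. H (fst x) (snd x)) = 0"
      using A B by (subst pmf_Pi) (simp_all only: finite_cartesian_product if_False)
    show ?thesis
    proof (cases "\<forall>l. l \<notin> A \<longrightarrow> H l = (\<lambda>_. d)")
      case True
      then obtain l k where l: "l \<in> A" "k \<notin> B" "H l k \<noteq> d" using False by (auto simp: fun_eq_iff)
      have "(\<Prod>l\<in>A. pmf (Pi_pmf B d (\<lambda>k. P (l, k))) (H l)) = 0"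
        using l A B by (subst prod_zero_iff) (auto simp: pmf_Pi intro!: bexI[of _ l])
      then show ?thesis using lhs_zero True A B by (simp add: pmf_Pi)
    next
      case False
      then show ?thesis using lhs_zero A B by (auto simp: pmf_Pi)
    qed
  qed
  finally show "pmf (map_pmf (\<lambda>f l k. f (l,k)) (Pi_pmf (A \<times> B) d P)) H =
      pmf (Pi_pmf A (\<lambda>_. d) (\<lambda>l. Pi_pmf B d (\<lambda>k. P (l,k)))) H" .
qed

lemma expectation_pair_pmf_mult:
  fixes F :: "'a \<Rightarrow> real" and G :: "'b \<Rightarrow> real"
  assumes "finite (set_pmf A)" "finite (set_pmf B)"
  shows "measure_pmf.expectation (pair_pmf A B) (\<lambda>x. F (fst x) * G (snd x))
       = measure_pmf.expectation A F * measure_pmf.expectation B G"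
proof -
  have pmf_pair': "pmf (pair_pmf A B) x = pmf A (fst x) * pmf B (snd x)" for x
    by (cases x) (simp add: pmf_pair)
  have "measure_pmf.expectation (pair_pmf A B) (\<lambda>x. F (fst x) * G (snd x))
      = (\<Sum>x\<in>set_pmf A \<times> set_pmf B. pmf (pair_pmf A B) x *\<^sub>R (F (fst x) * G (snd x)))"
    using assms by (intro integral_measure_pmf) auto
  also have "\<dots> = (\<Sum>a\<in>set_pmf A. pmf A a * F a) * (\<Sum>b\<in>set_pmf B. pmf B b * G b)"
    by (simp add: sum.cartesian_product pmf_pair' case_prod_unfold sum_product mult_ac)
  also have "\<dots> = measure_pmf.expectation A F * measure_pmf.expectation B G"
    using assms by (simp add: integral_measure_pmf[of "set_pmf A"] integral_measure_pmf[of "set_pmf B"])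
  finally show ?thesis .
qed

lemma expectation_bernoulli_pmf:
  fixes g :: "bool \<Rightarrow> real"
  assumes "0 \<le> q" "q \<le> 1"
  shows "measure_pmf.expectation (bernoulli_pmf q) g = q * g True + (1-q) * g False"
proof -
  have "measure_pmf.expectation (bernoulli_pmf q) g = (\<Sum>x\<in>UNIV. pmf (bernoulli_pmf q) x *\<^sub>R g x)"
    by (intro integral_measure_pmf) auto
  then show ?thesis using assms by (simp add: UNIV_bool)
qed

lemma expectation_pair_bernoulli_pmf:
  fixes f :: "bool \<times> bool \<Rightarrow> real"
  assumes "0 \<le> p" "p \<le> 1" "0 \<le> u" "u \<le> 1"
  shows "measure_pmf.expectation (pair_pmf (bernoulli_pmf p) (bernoulli_pmf (1-u))) f
     = p*(1-u)*f (True,True) + p*u*f (True,False) + (1-p)*(1-u)*f (False,True) + (1-p)*u*f (False,False)"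
proof -
  have bool_pairs: "(UNIV :: (bool \<times> bool) set) = {(True,True),(True,False),(False,True),(False,False)}"
    by auto
  have "measure_pmf.expectation (pair_pmf (bernoulli_pmf p) (bernoulli_pmf (1-u))) f
     = (\<Sum>x\<in>UNIV. pmf (pair_pmf (bernoulli_pmf p) (bernoulli_pmf (1-u))) x *\<^sub>R f x)"
    by (intro integral_measure_pmf) auto
  also have "\<dots> = p*(1-u)*f (True,True) + p*u*f (True,False) + (1-p)*(1-u)*f (False,True) + (1-p)*u*f (False,False)"
    using assms by (simp add: bool_pairs pmf_pair)
  finally show ?thesis .
qed

lemma finite_set_Pi_pmf:
  assumes "finite A" "\<And>x. x \<in> A \<Longrightarrow> finite (set_pmf (P x))"
  shows "finite (set_pmf (Pi_pmf A d P))"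
  using assms by (simp add: set_Pi_pmf finite_PiE_dflt)

lemma finite_set_bernoulli_pmf: "finite (set_pmf (bernoulli_pmf p))"
  by (rule finite_subset[of _ UNIV]) auto

definition test_row :: "sample \<Rightarrow> nat \<Rightarrow> (nat \<Rightarrow> bool \<times> bool) \<times> bool" where
  "test_row \<omega> l = (case \<omega> of (X, D, W) \<Rightarrow> ((\<lambda>k. (X (l,k), D (l,k))), W l))"

definition row_pmf :: "nat \<Rightarrow> real \<Rightarrow> real \<Rightarrow> real \<Rightarrow> ((nat \<Rightarrow> bool \<times> bool) \<times> bool) pmf" where
  "row_pmf N p u q =
     pair_pmf (Pi_pmf {0..<N} (False,False) (\<lambda>_. pair_pmf (bernoulli_pmf p) (bernoulli_pmf (1-u))))
              (bernoulli_pmf q)"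

lemma finite_set_row_pmf: "finite (set_pmf (row_pmf N p u q))"
  unfolding row_pmf_def by (auto intro!: finite_set_Pi_pmf simp: finite_set_bernoulli_pmf)

lemma finite_set_gt_pmf: "finite (set_pmf (gt_pmf M N p u q))"
  unfolding gt_pmf_def
  by (auto intro!: finite_set_Pi_pmf finite_cartesian_product simp: finite_set_bernoulli_pmf)

lemma map_test_row_gt_pmf:
  "map_pmf test_row (gt_pmf M N p u q) = Pi_pmf {0..<M} ((\<lambda>_. (False,False)), False) (\<lambda>_. row_pmf N p u q)"
proof -
  let ?X = "Pi_pmf ({0..<M} \<times> {0..<N}) False (\<lambda>_. bernoulli_pmf p)"
  let ?D = "Pi_pmf ({0..<M} \<times> {0..<N}) False (\<lambda>_. bernoulli_pmf (1 - u))"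
  let ?W = "Pi_pmf {0..<M} False (\<lambda>_. bernoulli_pmf q)"
  let ?XD = "\<lambda>_. pair_pmf (bernoulli_pmf p) (bernoulli_pmf (1-u))"
  let ?C = "Pi_pmf {0..<N} (False,False) ?XD"
  define zip_XD :: "((nat\<times>nat) \<Rightarrow> bool) \<times> ((nat\<times>nat) \<Rightarrow> bool) \<Rightarrow> (nat\<times>nat) \<Rightarrow> bool \<times> bool"
    where "zip_XD = (\<lambda>(f,g) i. (f i, g i))"
  define curry_XD :: "((nat\<times>nat) \<Rightarrow> bool \<times> bool) \<Rightarrow> nat \<Rightarrow> nat \<Rightarrow> bool \<times> bool"
    where "curry_XD = (\<lambda>f l k. f (l,k))"
  define zip_W :: "(nat \<Rightarrow> nat \<Rightarrow> bool \<times> bool) \<times> (nat \<Rightarrow> bool) \<Rightarrow> nat \<Rightarrow> (nat \<Rightarrow> bool \<times> bool) \<times> bool"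
    where "zip_W = (\<lambda>(f,g) i. (f i, g i))"
  have test_row_eq: "test_row = (\<lambda>x i. (\<lambda>k. (fst x (i,k), fst (snd x) (i,k)), snd (snd x) i))"
    by (auto simp: fun_eq_iff test_row_def split: prod.splits)
  have "map_pmf test_row (gt_pmf M N p u q) =
        map_pmf zip_W (map_pmf (\<lambda>(a,b). (curry_XD a, b)) (map_pmf (\<lambda>(a,b). (zip_XD a, b))
          (map_pmf (\<lambda>(x, (y, z)). ((x, y), z)) (gt_pmf M N p u q))))"
    by (simp add: pmf.map_comp o_def case_prod_unfold zip_W_def curry_XD_def zip_XD_def test_row_eq)
  also have "\<dots> = map_pmf zip_W (map_pmf (\<lambda>(a,b). (curry_XD a, b)) (pair_pmf (map_pmf zip_XD (pair_pmf ?X ?D)) ?W))"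
    by (simp add: gt_pmf_def pair_pair_pmf[symmetric] map_pair)
  also have "map_pmf zip_XD (pair_pmf ?X ?D) = Pi_pmf ({0..<M} \<times> {0..<N}) (False,False) ?XD"
    unfolding zip_XD_def by (rule map_pair_Pi_pmf) simp
  also have "map_pmf (\<lambda>(a,b). (curry_XD a, b)) (pair_pmf \<dots> ?W)
      = pair_pmf (Pi_pmf {0..<M} (\<lambda>_. (False,False)) (\<lambda>_. ?C)) ?W"
    unfolding curry_XD_def by (simp add: map_pair map_curry_Pi_pmf)
  also have "map_pmf zip_W \<dots> = Pi_pmf {0..<M} ((\<lambda>_. (False,False)), False) (\<lambda>_. row_pmf N p u q)"
    unfolding zip_W_def row_pmf_def by (rule map_pair_Pi_pmf) simp
  finally show ?thesis .
qed

lemma expectation_exp_sum_test_rows: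
  fixes g :: "(nat \<Rightarrow> bool \<times> bool) \<times> bool \<Rightarrow> real"
  shows "measure_pmf.expectation (gt_pmf M N p u q) (\<lambda>\<omega>. exp (\<Sum>l\<in>{0..<M}. g (test_row \<omega> l)))
       = measure_pmf.expectation (row_pmf N p u q) (\<lambda>r. exp (g r)) ^ M"
proof -
  have "measure_pmf.expectation (gt_pmf M N p u q) (\<lambda>\<omega>. exp (\<Sum>l\<in>{0..<M}. g (test_row \<omega> l)))
      = measure_pmf.expectation (map_pmf test_row (gt_pmf M N p u q)) (\<lambda>y. \<Prod>l\<in>{0..<M}. exp (g (y l)))"
    by (simp add: exp_sum)
  also have "\<dots> = (\<Prod>l\<in>{0..<M}. measure_pmf.expectation (row_pmf N p u q) (\<lambda>r. exp (g r)))"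
    unfolding map_test_row_gt_pmf
    by (rule expectation_prod_Pi_pmf) (auto intro!: integrable_measure_pmf_finite finite_set_row_pmf)
  finally show ?thesis by simp
qed

lemma expectation_row_pmf_mult:
  fixes f :: "nat \<Rightarrow> bool \<times> bool \<Rightarrow> real" and g :: "bool \<Rightarrow> real"
  assumes "\<And>k c. 0 \<le> f k c"
  shows "measure_pmf.expectation (row_pmf N p u q) (\<lambda>r. (\<Prod>k\<in>{0..<N}. f k (fst r k)) * g (snd r))
     = (\<Prod>k\<in>{0..<N}. measure_pmf.expectation (pair_pmf (bernoulli_pmf p) (bernoulli_pmf (1-u))) (f k))
       * measure_pmf.expectation (bernoulli_pmf q) g"
proof -
  let ?XD = "pair_pmf (bernoulli_pmf p) (bernoulli_pmf (1-u))"
  have "measure_pmf.expectation (row_pmf N p u q) (\<lambda>r. (\<Prod>k\<in>{0..<N}. f k (fst r k)) * g (snd r))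
     = measure_pmf.expectation (Pi_pmf {0..<N} (False,False) (\<lambda>_. ?XD)) (\<lambda>c. \<Prod>k\<in>{0..<N}. f k (c k))
       * measure_pmf.expectation (bernoulli_pmf q) g"
    unfolding row_pmf_def
    by (rule expectation_pair_pmf_mult) (auto intro!: finite_set_Pi_pmf simp: finite_set_bernoulli_pmf)
  also have "measure_pmf.expectation (Pi_pmf {0..<N} (False,False) (\<lambda>_. ?XD)) (\<lambda>c. \<Prod>k\<in>{0..<N}. f k (c k))
     = (\<Prod>k\<in>{0..<N}. measure_pmf.expectation ?XD (f k))"
    by (rule expectation_prod_Pi_pmf)
       (auto intro!: integrable_measure_pmf_finite simp: finite_set_bernoulli_pmf assms)
  finally show ?thesis .
qed

subsection \<open>The linear program\<close>

definition column_count :: "((nat \<times> nat) \<Rightarrow> bool) \<Rightarrow> nat set \<Rightarrow> nat \<Rightarrow> real" where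
  "column_count X Yz k = (\<Sum>l\<in>Yz. ind (X (l,k)))"

definition fractional_subset :: "nat \<Rightarrow> nat \<Rightarrow> (nat \<Rightarrow> real) \<Rightarrow> bool" where
  "fractional_subset N L z \<longleftrightarrow> (\<forall>k<N. 0 \<le> z k \<and> z k \<le> 1) \<and> (\<Sum>k<N. z k) \<le> real L"

definition max_weight_selection :: "nat \<Rightarrow> nat \<Rightarrow> (nat \<Rightarrow> real) \<Rightarrow> (nat \<Rightarrow> real) \<Rightarrow> bool" where
  "max_weight_selection N L c z \<longleftrightarrow> fractional_subset N L z \<and>
     (\<forall>z'. fractional_subset N L z' \<longrightarrow> (\<Sum>k<N. c k * z' k) \<le> (\<Sum>k<N. c k * z k))"

lemma column_count_nonneg: "0 \<le> column_count X Yz k"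
  unfolding column_count_def by (intro sum_nonneg) (simp add: ind_def)

lemma lp0_objective_eq:
  assumes "lp0_feasible N L X Yz z eta"
  shows "lp0_objective Yz eta = (\<Sum>k<N. column_count X Yz k) - (\<Sum>k<N. column_count X Yz k * z k)"
proof -
  have "lp0_objective Yz eta = (\<Sum>l\<in>Yz. \<Sum>k<N. ind (X (l, k)) * (1 - z k))"
    using assms unfolding lp0_objective_def lp0_feasible_def by (intro sum.cong) auto
  also have "\<dots> = (\<Sum>k<N. column_count X Yz k * (1 - z k))"
    unfolding column_count_def by (subst sum.swap) (simp add: sum_distrib_right)
  also have "\<dots> = (\<Sum>k<N. column_count X Yz k) - (\<Sum>k<N. column_count X Yz k * z k)"
    by (simp add: algebra_simps sum_subtractf)
  finally show ?thesis .
qed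

lemma lp0_optimal_imp_max_weight_selection:
  assumes opt: "lp0_optimal N L X Yz z eta"
  shows "max_weight_selection N L (column_count X Yz) z"
proof -
  have feas: "lp0_feasible N L X Yz z eta" using opt unfolding lp0_optimal_def by simp
  have "(\<Sum>k<N. column_count X Yz k * z' k) \<le> (\<Sum>k<N. column_count X Yz k * z k)"
    if "fractional_subset N L z'" for z'
  proof -
    define eta' where "eta' = (\<lambda>l. \<Sum>k<N. ind (X (l, k)) * (1 - z' k))"
    have "lp0_feasible N L X Yz z' eta'"
      using that unfolding lp0_feasible_def fractional_subset_def eta'_def
      by (auto intro!: sum_nonneg mult_nonneg_nonneg simp: ind_def)
    then have "lp0_objective Yz eta \<le> lp0_objective Yz eta'"
      using opt unfolding lp0_optimal_def by blast
    then show ?thesis using lp0_objective_eq[OF feas] lp0_objective_eq[OF \<open>lp0_feasible N L X Yz z' eta'\<close>]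
      by simp
  qed
  moreover have "fractional_subset N L z" using feas unfolding lp0_feasible_def fractional_subset_def by simp
  ultimately show ?thesis unfolding max_weight_selection_def by blast
qed

text \<open>If at least L items beat d, moving weight from d to one of them that is not saturated
  would increase the objective.\<close>
lemma max_weight_selection_vanishes:
  assumes opt: "max_weight_selection N L c z"
    and d: "d < N" "d \<notin> G" and G: "G \<subseteq> {..<N}" "L \<le> card G" and beats: "\<forall>g\<in>G. c d < c g"
  shows "z d = 0"
proof (rule ccontr)
  assume "z d \<noteq> 0"
  have box: "\<forall>k<N. 0 \<le> z k \<and> z k \<le> 1" and sum_z: "(\<Sum>k<N. z k) \<le> real L"
    using opt unfolding max_weight_selection_def fractional_subset_def by auto
  have finG: "finite G" using G finite_subset by blast
  have zd_pos: "0 < z d" using box d \<open>z d \<noteq> 0\<close> by force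
  have "\<exists>g\<in>G. z g < 1"
  proof (rule ccontr)
    assume "\<not> (\<exists>g\<in>G. z g < 1)"
    then have "real (card G) \<le> (\<Sum>g\<in>G. z g)"
      using sum_mono[of G "\<lambda>_. 1" z] by fastforce
    also have "\<dots> < z d + (\<Sum>g\<in>G. z g)" using zd_pos by simp
    also have "\<dots> = (\<Sum>k\<in>insert d G. z k)" using finG d by simp
    also have "\<dots> \<le> (\<Sum>k<N. z k)" using G d box by (intro sum_mono2) auto
    finally show False using sum_z G by linarith
  qed
  then obtain g where g: "g \<in> G" "z g < 1" by auto
  have gN: "g < N" and gd: "g \<noteq> d" using g G d by auto
  define e where "e = min (z d) (1 - z g)"
  define z' where "z' = (\<lambda>k. z k + e * ((if k = g then 1 else 0) - (if k = d then 1 else 0)))"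
  have e_pos: "0 < e" using zd_pos g unfolding e_def by simp
  have "fractional_subset N L z'"
  proof -
    have "0 \<le> z d" "z d \<le> 1" "0 \<le> z g" "z g \<le> 1" using box gN d by auto
    then have "\<forall>k<N. 0 \<le> z' k \<and> z' k \<le> 1"
      using box gd unfolding z'_def e_def by (auto simp: min_def)
    moreover have "(\<Sum>k<N. z' k) = (\<Sum>k<N. z k)"
      unfolding z'_def sum.distrib sum_distrib_left[symmetric] sum_subtractf using gN d by simp
    ultimately show ?thesis using sum_z unfolding fractional_subset_def by simp
  qed
  then have "(\<Sum>k<N. c k * z' k) \<le> (\<Sum>k<N. c k * z k)"
    using opt unfolding max_weight_selection_def by blast
  moreover have "(\<Sum>k<N. c k * z' k) = (\<Sum>k<N. c k * z k) + e * (c g - c d)"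
  proof -
    have "(\<Sum>k<N. c k * z' k)
        = (\<Sum>k<N. c k * z k + e * ((if k = g then c g else 0) - (if k = d then c d else 0)))"
      unfolding z'_def by (intro sum.cong) (auto simp: algebra_simps)
    then show ?thesis
      unfolding sum.distrib sum_distrib_left[symmetric] sum_subtractf using gN d by simp
  qed
  moreover have "0 < e * (c g - c d)" using e_pos beats g by simp
  ultimately show False by simp
qed

text \<open>A zero entry among the L largest forces all entries outside T to vanish, so the total
  weight is at most L - 1 and an item of G outside T could still be added.\<close>
lemma max_weight_selection_top_L_pos:
  assumes opt: "max_weight_selection N L c z" and top: "top_L N L z T"
    and G: "G \<subseteq> {..<N}" "L \<le> card G" "\<forall>g\<in>G. 0 < c g" and d: "d \<in> T" "d \<notin> G"
  shows "0 < z d"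
proof (rule ccontr)
  assume "\<not> 0 < z d"
  have box: "\<forall>k<N. 0 \<le> z k \<and> z k \<le> 1"
    using opt unfolding max_weight_selection_def fractional_subset_def by auto
  have T: "T \<subseteq> {0..<N}" "card T = L" "\<forall>i\<in>T. \<forall>j\<in>{0..<N} - T. z j \<le> z i"
    using top unfolding top_L_def by auto
  have finT: "finite T" using T(1) finite_subset by blast
  have "d < N" using d T(1) by auto
  then have zd: "z d = 0" using \<open>\<not> 0 < z d\<close> box by force
  have "0 < card T" using finT d card_gt_0_iff by blast
  then have L_pos: "1 \<le> L" using T(2) by simp
  have z_outside: "z j = 0" if "j < N" "j \<notin> T" for j
  proof -
    have "z j \<le> z d" using T(3) d(1) that by simp
    then show ?thesis using zd box that(1) by force
  qed
  have "(\<Sum>k<N. z k) = (\<Sum>k\<in>T. z k)"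
    using T(1) z_outside by (intro sum.mono_neutral_right) auto
  also have "\<dots> = (\<Sum>k\<in>T - {d}. z k)"
    using finT d zd by (simp add: sum_diff1)
  also have "\<dots> \<le> (\<Sum>k\<in>T - {d}. 1)"
    using T(1) box by (intro sum_mono) auto
  also have "\<dots> = real L - 1"
    using finT d T(2) L_pos by (simp add: of_nat_diff)
  finally have sum_z: "(\<Sum>k<N. z k) + 1 \<le> real L" by simp
  have "card (G \<inter> T) \<le> card (T - {d})" using finT d by (intro card_mono) auto
  then have GT_small: "card (G \<inter> T) < card G" using finT d T(2) L_pos G(2) by simp
  have "G - T \<noteq> {}"
  proof
    assume "G - T = {}"
    then have "G \<inter> T = G" by auto
    then show False using GT_small by simp
  qed
  then obtain g where g: "g \<in> G" "g \<notin> T" by auto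
  have gN: "g < N" and zg: "z g = 0" using g G(1) z_outside by auto
  have update_sum: "(\<Sum>k<N. a k * (z(g := 1)) k) = (\<Sum>k<N. a k * z k) + a g" for a :: "nat \<Rightarrow> real"
  proof -
    have "(\<Sum>k<N. a k * (z(g := 1)) k) = (\<Sum>k<N. a k * z k + (if k = g then a g else 0))"
      using zg by (intro sum.cong) auto
    then show ?thesis using gN by (simp add: sum.distrib)
  qed
  have "fractional_subset N L (z(g := 1))"
    using box sum_z update_sum[of "\<lambda>_. 1"] unfolding fractional_subset_def by simp
  then have "(\<Sum>k<N. c k * (z(g := 1)) k) \<le> (\<Sum>k<N. c k * z k)"
    using opt unfolding max_weight_selection_def by blast
  moreover have "0 < c g" using G(3) g(1) by blast
  ultimately show False using update_sum[of c] by linarith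
qed

lemma rolpal_success_if_separated:
  fixes \<omega> :: sample and M N L :: nat and Sd :: "nat set" and \<tau> :: real
  defines "cnt \<equiv> column_count (fst \<omega>) (zero_tests M Sd \<omega>)"
  assumes Sd: "Sd \<subseteq> {0..<N}"
    and defective_low: "\<forall>d\<in>Sd. cnt d < \<tau>"
    and no_low_subset: "\<forall>S. S \<subseteq> {0..<N} - Sd \<longrightarrow> card S = (N - card Sd) - (L - 1) \<longrightarrow> (\<exists>k\<in>S. \<tau> \<le> cnt k)"
  shows "rolpal_success M N L Sd \<omega>"
  unfolding rolpal_success_def
proof (intro allI impI)
  fix z eta T
  assume opt: "lp0_optimal N L (fst \<omega>) (zero_tests M Sd \<omega>) z eta" and top: "top_L N L z T"
  have mws: "max_weight_selection N L cnt z"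
    unfolding cnt_def using opt by (rule lp0_optimal_imp_max_weight_selection)
  define G where "G = {k\<in>{0..<N}. k \<notin> Sd \<and> \<tau> \<le> cnt k}"
  define Low where "Low = {k\<in>{0..<N}. k \<notin> Sd \<and> cnt k < \<tau>}"
  have G_sub: "G \<subseteq> {..<N}" unfolding G_def by auto
  have card_G: "L \<le> card G"
  proof (rule ccontr)
    assume "\<not> L \<le> card G"
    have "card ({0..<N} - Sd) = N - card Sd"
      using Sd by (simp add: card_Diff_subset finite_subset)
    moreover have "{0..<N} - Sd = G \<union> Low" "G \<inter> Low = {}"
      unfolding G_def Low_def by auto
    moreover have "finite G" "finite Low" unfolding G_def Low_def by auto
    ultimately have "card G + card Low = N - card Sd" by (simp add: card_Un_disjoint)
    then have "(N - card Sd) - (L - 1) \<le> card Low" using \<open>\<not> L \<le> card G\<close> by linarith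
    then obtain S where S: "S \<subseteq> Low" "card S = (N - card Sd) - (L - 1)"
      by (meson obtain_subset_with_card_n)
    moreover have "S \<subseteq> {0..<N} - Sd" using S(1) unfolding Low_def by auto
    ultimately obtain k where "k \<in> S" "\<tau> \<le> cnt k" using no_low_subset by blast
    moreover have "cnt k < \<tau>" using \<open>k \<in> S\<close> S(1) unfolding Low_def by auto
    ultimately show False by simp
  qed
  show "T \<inter> Sd = {}"
  proof (rule ccontr)
    assume "T \<inter> Sd \<noteq> {}"
    then obtain d where d: "d \<in> T" "d \<in> Sd" by auto
    have dN: "d < N" and dG: "d \<notin> G" using d Sd unfolding G_def by auto
    have beats: "\<forall>g\<in>G. cnt d < cnt g" using defective_low d(2) unfolding G_def by force
    have "z d = 0" by (rule max_weight_selection_vanishes[OF mws dN dG G_sub card_G beats])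
    moreover have "0 < z d"
    proof (rule max_weight_selection_top_L_pos[OF mws top G_sub card_G _ d(1) dG])
      show "\<forall>g\<in>G. 0 < cnt g"
        using beats column_count_nonneg[of _ _ d] unfolding cnt_def by (meson le_less_trans)
    qed
    ultimately show False by simp
  qed
qed

subsection \<open>Moments of a single test\<close>

lemma prob_le_expectation:
  fixes f :: "'a \<Rightarrow> real"
  assumes "finite (set_pmf P)" "\<And>x. 0 \<le> f x" "\<And>x. A x \<Longrightarrow> 1 \<le> f x"
  shows "measure_pmf.prob P {x. A x} \<le> measure_pmf.expectation P f"
proof -
  have "measure_pmf.prob P {x. A x} = measure_pmf.expectation P (indicator {x. A x})" by simp
  also have "\<dots> \<le> measure_pmf.expectation P f"
    by (intro integral_mono integrable_measure_pmf_finite assms(1)) (use assms in \<open>auto simp: indicator_def\<close>)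
  finally show ?thesis .
qed

lemma prod_if_disjoint:
  fixes F G :: "'a \<Rightarrow> 'b::comm_monoid_mult"
  assumes "finite A" "S \<subseteq> A" "T \<subseteq> A" "S \<inter> T = {}"
  shows "(\<Prod>k\<in>A. if k \<in> S then F k else if k \<in> T then G k else 1) = prod F S * prod G T"
proof -
  have fin: "finite S" "finite T" using assms finite_subset by blast+
  have "(\<Prod>k\<in>A. if k \<in> S then F k else if k \<in> T then G k else 1)
      = (\<Prod>k\<in>S \<union> T. if k \<in> S then F k else if k \<in> T then G k else 1)"
    using assms by (intro prod.mono_neutral_right) auto
  also have "\<dots> = (\<Prod>k\<in>S. if k \<in> S then F k else if k \<in> T then G k else 1)
      * (\<Prod>k\<in>T. if k \<in> S then F k else if k \<in> T then G k else 1)"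
    using fin assms by (intro prod.union_disjoint) auto
  also have "\<dots> = prod F S * prod G T"
    using assms by (auto intro!: arg_cong2[where f = "(*)"] prod.cong)
  finally show ?thesis .
qed

definition negative_row :: "nat set \<Rightarrow> (nat \<Rightarrow> bool \<times> bool) \<times> bool \<Rightarrow> bool" where
  "negative_row Sd r \<longleftrightarrow> \<not> snd r \<and> (\<forall>k\<in>Sd. \<not> (fst (fst r k) \<and> snd (fst r k)))"

lemma zero_tests_eq_negative_rows:
  "zero_tests M Sd \<omega> = {l\<in>{0..<M}. negative_row Sd (test_row \<omega> l)}"
  unfolding zero_tests_def
  by (cases \<omega>) (auto simp: outcome_def negative_row_def test_row_def)

lemma column_count_zero_tests:
  "column_count (fst \<omega>) (zero_tests M Sd \<omega>) k
     = (\<Sum>l\<in>{0..<M}. ind (negative_row Sd (test_row \<omega> l) \<and> fst (fst (test_row \<omega> l) k)))"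
proof -
  have X: "fst \<omega> (l,k) = fst (fst (test_row \<omega> l) k)" for l
    by (cases \<omega>) (auto simp: test_row_def)
  have "column_count (fst \<omega>) (zero_tests M Sd \<omega>) k
      = (\<Sum>l\<in>{0..<M}. if negative_row Sd (test_row \<omega> l) then ind (fst \<omega> (l,k)) else 0)"
    unfolding column_count_def zero_tests_eq_negative_rows by (rule sum.inter_filter) simp
  also have "\<dots> = (\<Sum>l\<in>{0..<M}. ind (negative_row Sd (test_row \<omega> l) \<and> fst (fst (test_row \<omega> l) k)))"
    by (intro sum.cong) (auto simp: ind_def X)
  finally show ?thesis .
qed

lemma card_zero_tests:
  "real (card (zero_tests M Sd \<omega>)) = (\<Sum>l\<in>{0..<M}. ind (negative_row Sd (test_row \<omega> l)))"
proof -
  have "real (card (zero_tests M Sd \<omega>)) = (\<Sum>l\<in>{l\<in>{0..<M}. negative_row Sd (test_row \<omega> l)}. 1)"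
    unfolding zero_tests_eq_negative_rows by simp
  also have "\<dots> = (\<Sum>l\<in>{0..<M}. if negative_row Sd (test_row \<omega> l) then 1 else 0)"
    by (rule sum.inter_filter) simp
  finally show ?thesis by (simp add: ind_def)
qed

lemma prod_ind: "finite A \<Longrightarrow> (\<Prod>k\<in>A. ind (P k)) = ind (\<forall>k\<in>A. P k)"
  by (induction A rule: finite_induct) (auto simp: ind_def)

lemma exp_mult_ind: "exp (t * ind b) = 1 + (exp t - 1) * ind b"
  by (simp add: ind_def)

lemma integrable_row_pmf [simp]: "integrable (measure_pmf (row_pmf N p u q)) (f :: _ \<Rightarrow> real)"
  by (rule integrable_measure_pmf_finite) (rule finite_set_row_pmf)

locale group_testing =
  fixes N :: nat and p u q :: real and Sd :: "nat set"
  assumes p: "0 \<le> p" "p \<le> 1" and u: "0 \<le> u" "u \<le> 1" and q: "0 \<le> q" "q \<le> 1"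
    and Sd: "Sd \<subseteq> {0..<N}"
begin

abbreviation E_row :: "((nat \<Rightarrow> bool \<times> bool) \<times> bool \<Rightarrow> real) \<Rightarrow> real" where
  "E_row \<equiv> measure_pmf.expectation (row_pmf N p u q)"

lemma finite_Sd: "finite Sd"
  using Sd finite_subset by blast

lemma expectation_negative_row_product:
  fixes f :: "nat \<Rightarrow> bool \<times> bool \<Rightarrow> real"
  assumes "\<And>k c. 0 \<le> f k c"
  shows "E_row (\<lambda>r. (\<Prod>k\<in>{0..<N}. f k (fst r k)) * ind (\<not> snd r))
     = (\<Prod>k\<in>{0..<N}. p*(1-u)*f k (True,True) + p*u*f k (True,False)
                     + (1-p)*(1-u)*f k (False,True) + (1-p)*u*f k (False,False)) * (1-q)"
proof -
  have "E_row (\<lambda>r. (\<Prod>k\<in>{0..<N}. f k (fst r k)) * ind (\<not> snd r))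
     = (\<Prod>k\<in>{0..<N}. measure_pmf.expectation (pair_pmf (bernoulli_pmf p) (bernoulli_pmf (1-u))) (f k))
       * measure_pmf.expectation (bernoulli_pmf q) (\<lambda>w. ind (\<not> w))"
    by (rule expectation_row_pmf_mult[OF assms])
  also have "\<dots> = (\<Prod>k\<in>{0..<N}. p*(1-u)*f k (True,True) + p*u*f k (True,False)
                     + (1-p)*(1-u)*f k (False,True) + (1-p)*u*f k (False,False)) * (1-q)"
    by (simp only: expectation_pair_bernoulli_pmf[OF p u] expectation_bernoulli_pmf[OF q]) (simp add: ind_def)
  finally show ?thesis .
qed

lemma expectation_negative_row_hit:
  assumes d: "d \<in> Sd"
  shows "E_row (\<lambda>r. ind (negative_row Sd r \<and> fst (fst r d))) = p*u*(1-p*(1-u))^(card Sd - 1)*(1-q)"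
proof -
  define Q where "Q = (\<lambda>k (c::bool\<times>bool). if k \<in> {d} then fst c \<and> \<not> snd c
                        else if k \<in> Sd - {d} then \<not> (fst c \<and> snd c) else True)"
  have "ind (negative_row Sd r \<and> fst (fst r d)) = (\<Prod>k\<in>{0..<N}. ind (Q k (fst r k))) * ind (\<not> snd r)" for r
  proof -
    have "(\<forall>k\<in>{0..<N}. Q k (fst r k)) \<longleftrightarrow> fst (fst r d) \<and> (\<forall>k\<in>Sd. \<not> (fst (fst r k) \<and> snd (fst r k)))"
      using d Sd unfolding Q_def by (auto split: if_splits)
    then show ?thesis unfolding negative_row_def by (auto simp: prod_ind ind_def)
  qed
  moreover have "p*(1-u)*ind (Q k (True,True)) + p*u*ind (Q k (True,False))
      + (1-p)*(1-u)*ind (Q k (False,True)) + (1-p)*u*ind (Q k (False,False))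
      = (if k \<in> {d} then p*u else if k \<in> Sd - {d} then 1 - p*(1-u) else 1)" for k
    unfolding Q_def ind_def by (auto simp: algebra_simps)
  ultimately have "E_row (\<lambda>r. ind (negative_row Sd r \<and> fst (fst r d)))
      = (\<Prod>k\<in>{0..<N}. if k \<in> {d} then p*u else if k \<in> Sd - {d} then 1 - p*(1-u) else 1) * (1-q)"
    using expectation_negative_row_product[of "\<lambda>k c. ind (Q k c)"] by (simp add: ind_def)
  also have "\<dots> = p*u*(1-p*(1-u))^(card Sd - 1)*(1-q)"
    using d Sd finite_Sd by (subst prod_if_disjoint) auto
  finally show ?thesis .
qed

lemma expectation_negative_row_weighted:
  assumes S: "S \<subseteq> {0..<N}" "S \<inter> Sd = {}"
  shows "E_row (\<lambda>r. ind (negative_row Sd r) * (\<Prod>k\<in>S. exp (-t * ind (fst (fst r k)))))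
     = (1-p*(1-u))^card Sd * (1 - p + p * exp (-t)) ^ card S * (1-q)"
proof -
  define f where "f = (\<lambda>k (c::bool\<times>bool). if k \<in> Sd then ind (\<not> (fst c \<and> snd c))
                        else if k \<in> S then exp (-t * ind (fst c)) else 1)"
  have "ind (negative_row Sd r) * (\<Prod>k\<in>S. exp (-t * ind (fst (fst r k))))
      = (\<Prod>k\<in>{0..<N}. f k (fst r k)) * ind (\<not> snd r)" for r
  proof -
    have "(\<Prod>k\<in>{0..<N}. f k (fst r k)) = (\<Prod>k\<in>Sd. ind (\<not> (fst (fst r k) \<and> snd (fst r k))))
        * (\<Prod>k\<in>S. exp (-t * ind (fst (fst r k))))"
      unfolding f_def using Sd S by (subst prod_if_disjoint) auto
    then show ?thesis unfolding negative_row_def using finite_Sd by (auto simp: prod_ind ind_def)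
  qed
  moreover have "p*(1-u)*f k (True,True) + p*u*f k (True,False) + (1-p)*(1-u)*f k (False,True)
      + (1-p)*u*f k (False,False)
      = (if k \<in> Sd then 1 - p*(1-u) else if k \<in> S then 1 - p + p * exp (-t) else 1)" for k
    unfolding f_def ind_def by (auto simp: algebra_simps)
  moreover have "0 \<le> f k c" for k c unfolding f_def ind_def by simp
  ultimately have "E_row (\<lambda>r. ind (negative_row Sd r) * (\<Prod>k\<in>S. exp (-t * ind (fst (fst r k)))))
      = (\<Prod>k\<in>{0..<N}. if k \<in> Sd then 1 - p*(1-u) else if k \<in> S then 1 - p + p * exp (-t) else 1) * (1-q)"
    using expectation_negative_row_product[of f] by simp
  also have "\<dots> = (1-p*(1-u))^card Sd * (1 - p + p * exp (-t)) ^ card S * (1-q)"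
    using Sd S by (subst prod_if_disjoint) auto
  finally show ?thesis .
qed

lemma expectation_negative_row: "E_row (\<lambda>r. ind (negative_row Sd r)) = (1-p*(1-u))^card Sd * (1-q)"
  using expectation_negative_row_weighted[of "{}" 0] by simp

end

subsection \<open>Chernoff exponents\<close>

lemma exp_neg_le_quadratic:
  fixes t :: real assumes "0 \<le> t" shows "exp (-t) \<le> 1 - t + t^2"
proof -
  have "1 - t + t^2 = (t - 1/2)^2 + 3/4" by (simp add: power2_eq_square algebra_simps)
  then have pos: "0 < 1 - t + t^2" using zero_le_power2[of "t - 1/2"] by linarith
  have "1 \<le> (1 + t) * (1 - t + t^2)"
    using assms by (simp add: algebra_simps power2_eq_square power3_eq_cube)
  also have "\<dots> \<le> exp t * (1 - t + t^2)"
    using pos exp_ge_add_one_self[of t] by (intro mult_right_mono) auto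
  finally show ?thesis by (simp add: exp_minus field_simps)
qed

lemma one_plus_power_le_exp:
  fixes x :: real assumes "0 \<le> 1 + x" shows "(1 + x) ^ M \<le> exp (real M * x)"
proof -
  have "(1 + x) ^ M \<le> exp x ^ M" using assms exp_ge_add_one_self[of x] by (intro power_mono) auto
  also have "\<dots> = exp (real M * x)" by (simp add: exp_of_nat_mult)
  finally show ?thesis .
qed

lemma exp_neg_two_le_one_minus_inverse_power:
  fixes K :: nat assumes "2 \<le> K" shows "exp (-2) \<le> (1 - 1 / real K) ^ K"
proof -
  have x: "0 \<le> 1 / real K" "1 / real K \<le> 1/2" using assms by (auto simp: field_simps)
  have "-2 \<le> real K * (- (1/real K) - 2 * (1/real K)^2)"
    using assms by (simp add: field_simps power2_eq_square)
  also have "\<dots> \<le> real K * ln (1 - 1/real K)"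
    by (intro mult_left_mono ln_one_minus_pos_lower_bound[OF x]) simp
  finally have "exp (-2) \<le> exp (real K * ln (1 - 1/real K))" by simp
  also have "\<dots> = (1 - 1 / real K) ^ K" using x by (simp add: exp_of_nat_mult)
  finally show ?thesis .
qed

lemma chernoff_upper_exponent_le:
  fixes \<mu> \<delta> a :: real
  assumes mu: "0 \<le> \<mu>" and d: "0 < \<delta>" "\<delta> \<le> 1" and a: "0 \<le> a" and mean: "real M * a = (1-\<delta>)*\<mu>"
  shows "exp (-(\<delta>/4)*((1-\<delta>/2)*\<mu>)) * (1 + (exp (\<delta>/4) - 1)*a)^M \<le> exp (-(\<delta>^2*\<mu>/16))"
proof -
  have "(1 + (exp (\<delta>/4) - 1)*a)^M \<le> exp ((exp (\<delta>/4) - 1) * (real M * a))"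
    using a d one_plus_power_le_exp[of "(exp (\<delta>/4) - 1)*a" M] by (simp add: mult_ac)
  also have "\<dots> \<le> exp ((\<delta>/4 + (\<delta>/4)^2) * ((1-\<delta>)*\<mu>))"
    unfolding mean using exp_bound[of "\<delta>/4"] mu d by (simp add: mult_right_mono)
  finally have "exp (-(\<delta>/4)*((1-\<delta>/2)*\<mu>)) * (1 + (exp (\<delta>/4) - 1)*a)^M
      \<le> exp (-(\<delta>/4)*((1-\<delta>/2)*\<mu>) + (\<delta>/4 + (\<delta>/4)^2) * ((1-\<delta>)*\<mu>))"
    unfolding exp_add by (rule mult_left_mono) simp
  also have "-(\<delta>/4)*((1-\<delta>/2)*\<mu>) + (\<delta>/4 + (\<delta>/4)^2) * ((1-\<delta>)*\<mu>) = -(\<delta>^2*\<mu>/16) - \<mu>*\<delta>^3/16"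
    by (simp add: field_simps power2_eq_square power3_eq_cube)
  also have "exp \<dots> \<le> exp (-(\<delta>^2*\<mu>/16))" using mu d by simp
  finally show ?thesis .
qed

lemma chernoff_lower_exponent_le:
  fixes \<mu> \<delta> \<pi> :: real
  assumes d: "0 < \<delta>" "\<delta> \<le> 1" and pi: "0 \<le> \<pi>" "\<pi> \<le> 1" and mu: "\<mu> \<le> real M * \<pi>"
  shows "exp ((\<delta>/8)*((1-\<delta>/4)*(real M*\<pi>))) * (1 + (exp (-(\<delta>/8)) - 1)*\<pi>)^M \<le> exp (-(\<delta>^2*\<mu>/64))"
proof -
  have "(1 - exp (-(\<delta>/8))) * \<pi> \<le> 1 * 1" using pi by (intro mult_mono) auto
  then have "(1 + (exp (-(\<delta>/8)) - 1)*\<pi>)^M \<le> exp ((exp (-(\<delta>/8)) - 1) * (real M*\<pi>))"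
    using one_plus_power_le_exp[of "(exp (-(\<delta>/8)) - 1)*\<pi>" M] by (simp add: algebra_simps)
  also have "\<dots> \<le> exp ((-(\<delta>/8) + (\<delta>/8)^2) * (real M*\<pi>))"
    using exp_neg_le_quadratic[of "\<delta>/8"] d pi by (simp add: mult_right_mono)
  finally have "exp ((\<delta>/8)*((1-\<delta>/4)*(real M*\<pi>))) * (1 + (exp (-(\<delta>/8)) - 1)*\<pi>)^M
      \<le> exp ((\<delta>/8)*((1-\<delta>/4)*(real M*\<pi>)) + (-(\<delta>/8) + (\<delta>/8)^2) * (real M*\<pi>))"
    unfolding exp_add by (rule mult_left_mono) simp
  also have "(\<delta>/8)*((1-\<delta>/4)*(real M*\<pi>)) + (-(\<delta>/8) + (\<delta>/8)^2) * (real M*\<pi>) = -(\<delta>^2*(real M*\<pi>)/64)"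
    by (simp add: field_simps power2_eq_square)
  also have "exp \<dots> \<le> exp (-(\<delta>^2*\<mu>/64))" using mu by (simp add: mult_left_mono)
  finally show ?thesis .
qed

lemma chernoff_joint_exponent_le:
  fixes \<mu> \<delta> p z :: real
  assumes d: "0 < \<delta>" "\<delta> \<le> 1" and p: "0 \<le> p" "p \<le> 1" and z: "0 \<le> z" and mu: "p * z = (1-\<delta>/4) * \<mu>"
  shows "(\<delta>/8)*((1-\<delta>/2)*\<mu>) + z * ln (1 - p + p * exp (-(\<delta>/8))) \<le> -(\<delta>^2*\<mu>/64)"
proof -
  have "0 < 1 - p + p * exp (-(\<delta>/8))"
    using p by (cases "p = 1") (auto intro: add_pos_nonneg)
  then have "ln (1 - p + p * exp (-(\<delta>/8))) \<le> (1 - p + p * exp (-(\<delta>/8))) - 1"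
    by (rule ln_le_minus_one)
  also have "\<dots> = p * (exp (-(\<delta>/8)) - 1)" by (simp add: algebra_simps)
  also have "\<dots> \<le> p * (-(\<delta>/8) + (\<delta>/8)^2)"
    using exp_neg_le_quadratic[of "\<delta>/8"] d p by (intro mult_left_mono) auto
  finally have "z * ln (1 - p + p * exp (-(\<delta>/8))) \<le> z * (p * (-(\<delta>/8) + (\<delta>/8)^2))"
    using z by (rule mult_left_mono)
  also have "\<dots> = ((1-\<delta>/4) * \<mu>) * (-(\<delta>/8) + (\<delta>/8)^2)"
    by (simp only: mu[symmetric] mult.assoc mult.left_commute)
  finally have "(\<delta>/8)*((1-\<delta>/2)*\<mu>) + z * ln (1 - p + p * exp (-(\<delta>/8)))
      \<le> (\<delta>/8)*((1-\<delta>/2)*\<mu>) + ((1-\<delta>/4) * \<mu>) * (-(\<delta>/8) + (\<delta>/8)^2)" by simp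
  also have "\<dots> = -(\<delta>^2*\<mu>/64) - \<mu>*\<delta>^3/256"
    by (simp add: field_simps power2_eq_square power3_eq_cube)
  also have "\<dots> \<le> -(\<delta>^2*\<mu>/64)"
  proof -
    have "0 \<le> (1-\<delta>/4) * \<mu>" unfolding mu[symmetric] using p z by simp
    then have "0 \<le> \<mu>" using d by (simp add: zero_le_mult_iff)
    then show ?thesis using d by simp
  qed
  finally show ?thesis .
qed

subsection \<open>Tail bounds for the counts\<close>

context group_testing
begin

abbreviation P :: "nat \<Rightarrow> sample pmf" where
  "P M \<equiv> gt_pmf M N p u q"

abbreviation count :: "nat \<Rightarrow> sample \<Rightarrow> nat \<Rightarrow> real" where
  "count M \<omega> \<equiv> column_count (fst \<omega>) (zero_tests M Sd \<omega>)"

lemma prob_count_ge_le: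
  assumes d: "d \<in> Sd" and t: "0 \<le> t"
  shows "measure_pmf.prob (P M) {\<omega>. \<tau> \<le> count M \<omega> d}
     \<le> exp (-t*\<tau>) * (1 + (exp t - 1) * (p*u*(1-p*(1-u))^(card Sd - 1)*(1-q))) ^ M"
proof -
  let ?hit = "\<lambda>r. t * ind (negative_row Sd r \<and> fst (fst r d))"
  have "measure_pmf.prob (P M) {\<omega>. \<tau> \<le> count M \<omega> d}
      \<le> measure_pmf.expectation (P M) (\<lambda>\<omega>. exp (-t*\<tau>) * exp (\<Sum>l\<in>{0..<M}. ?hit (test_row \<omega> l)))"
  proof (rule prob_le_expectation[OF finite_set_gt_pmf])
    fix \<omega> assume "\<tau> \<le> count M \<omega> d"
    moreover have "(\<Sum>l\<in>{0..<M}. ?hit (test_row \<omega> l)) = t * count M \<omega> d"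
      by (simp add: column_count_zero_tests sum_distrib_left)
    ultimately show "1 \<le> exp (-t*\<tau>) * exp (\<Sum>l\<in>{0..<M}. ?hit (test_row \<omega> l))"
      using t by (simp add: exp_add[symmetric] mult_left_mono)
  qed simp
  also have "\<dots> = exp (-t*\<tau>) * E_row (\<lambda>r. exp (?hit r)) ^ M"
    using expectation_exp_sum_test_rows[of M N p u q ?hit] by simp
  also have "E_row (\<lambda>r. exp (?hit r)) = 1 + (exp t - 1) * (p*u*(1-p*(1-u))^(card Sd - 1)*(1-q))"
    unfolding exp_mult_ind by (simp add: expectation_negative_row_hit[OF d])
  finally show ?thesis .
qed

lemma prob_card_zero_tests_lt_le:
  assumes t: "0 \<le> t"
  shows "measure_pmf.prob (P M) {\<omega>. real (card (zero_tests M Sd \<omega>)) < z}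
     \<le> exp (t*z) * (1 + (exp (-t) - 1) * ((1-p*(1-u))^card Sd * (1-q))) ^ M"
proof -
  let ?neg = "\<lambda>r. -t * ind (negative_row Sd r)"
  have "measure_pmf.prob (P M) {\<omega>. real (card (zero_tests M Sd \<omega>)) < z}
      \<le> measure_pmf.expectation (P M) (\<lambda>\<omega>. exp (t*z) * exp (\<Sum>l\<in>{0..<M}. ?neg (test_row \<omega> l)))"
  proof (rule prob_le_expectation[OF finite_set_gt_pmf])
    fix \<omega> assume "real (card (zero_tests M Sd \<omega>)) < z"
    moreover have "(\<Sum>l\<in>{0..<M}. ?neg (test_row \<omega> l)) = -t * real (card (zero_tests M Sd \<omega>))"
      by (simp add: card_zero_tests sum_distrib_left)
    ultimately show "1 \<le> exp (t*z) * exp (\<Sum>l\<in>{0..<M}. ?neg (test_row \<omega> l))"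
      using t by (simp add: exp_add[symmetric] right_diff_distrib[symmetric] mult_left_mono)
  qed simp
  also have "\<dots> = exp (t*z) * E_row (\<lambda>r. exp (?neg r)) ^ M"
    using expectation_exp_sum_test_rows[of M N p u q ?neg] by simp
  also have "E_row (\<lambda>r. exp (?neg r)) = 1 + (exp (-t) - 1) * ((1-p*(1-u))^card Sd * (1-q))"
    unfolding exp_mult_ind by (simp add: expectation_negative_row)
  finally show ?thesis .
qed

lemma expectation_tilted_row:
  assumes S: "S \<subseteq> {0..<N}" "S \<inter> Sd = {}" and r: "exp r * (1 - p + p * exp (-t)) ^ card S = 1"
  shows "E_row (\<lambda>x. exp (r * ind (negative_row Sd x) - t * (\<Sum>k\<in>S. ind (negative_row Sd x \<and> fst (fst x k))))) = 1"
proof -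
  have "exp (r * ind (negative_row Sd x) - t * (\<Sum>k\<in>S. ind (negative_row Sd x \<and> fst (fst x k))))
      = 1 - ind (negative_row Sd x) + exp r * (ind (negative_row Sd x) * (\<Prod>k\<in>S. exp (-t * ind (fst (fst x k)))))" for x
  proof (cases "negative_row Sd x")
    case True
    have "finite S" using S(1) finite_subset by blast
    have "r * ind (negative_row Sd x) - t * (\<Sum>k\<in>S. ind (negative_row Sd x \<and> fst (fst x k)))
        = r + (\<Sum>k\<in>S. -t * ind (fst (fst x k)))"
      using True by (simp add: ind_def sum_distrib_left sum_negf)
    then have "exp (r * ind (negative_row Sd x) - t * (\<Sum>k\<in>S. ind (negative_row Sd x \<and> fst (fst x k))))
        = exp r * exp (\<Sum>k\<in>S. -t * ind (fst (fst x k)))"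
      by (simp only: exp_add)
    then show ?thesis using True \<open>finite S\<close> by (simp add: exp_sum ind_def)
  qed (simp add: ind_def)
  then have "E_row (\<lambda>x. exp (r * ind (negative_row Sd x) - t * (\<Sum>k\<in>S. ind (negative_row Sd x \<and> fst (fst x k)))))
      = 1 - E_row (\<lambda>x. ind (negative_row Sd x))
        + exp r * E_row (\<lambda>x. ind (negative_row Sd x) * (\<Prod>k\<in>S. exp (-t * ind (fst (fst x k)))))"
    by simp
  also have "\<dots> = 1 - (1-p*(1-u))^card Sd * (1-q)
      + (exp r * (1 - p + p * exp (-t)) ^ card S) * ((1-p*(1-u))^card Sd * (1-q))"
    unfolding expectation_negative_row expectation_negative_row_weighted[OF S] by (simp only: mult_ac)
  finally show ?thesis using r by simp
qed

lemma prob_low_counts_le: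
  assumes S: "S \<subseteq> {0..<N}" "S \<inter> Sd = {}" and t: "0 \<le> t"
  shows "measure_pmf.prob (P M) {\<omega>. z \<le> real (card (zero_tests M Sd \<omega>)) \<and> (\<forall>k\<in>S. count M \<omega> k < \<tau>)}
     \<le> exp (real (card S) * (t*\<tau> + z * ln (1 - p + p * exp (-t))))"
proof -
  define \<beta> where "\<beta> = 1 - p + p * exp (-t)"
  define r where "r = - real (card S) * ln \<beta>"
  have "p * (1 - exp (-t)) \<le> 1 - exp (-t)" "0 \<le> p * (1 - exp (-t))"
    using p t by (auto intro: mult_left_le_one_le)
  then have \<beta>: "0 < \<beta>" "\<beta> \<le> 1"
    unfolding \<beta>_def right_diff_distrib using exp_gt_zero[of "-t"] by linarith+
  then have "0 \<le> r" unfolding r_def by (simp add: mult_nonneg_nonpos)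
  have "\<beta> ^ card S = exp (real (card S) * ln \<beta>)" using \<beta> by (simp add: exp_of_nat_mult)
  then have r_tilt: "exp r * \<beta> ^ card S = 1" unfolding r_def by (simp add: exp_add[symmetric])
  let ?h = "\<lambda>x. r * ind (negative_row Sd x) - t * (\<Sum>k\<in>S. ind (negative_row Sd x \<and> fst (fst x k)))"
  have "measure_pmf.prob (P M) {\<omega>. z \<le> real (card (zero_tests M Sd \<omega>)) \<and> (\<forall>k\<in>S. count M \<omega> k < \<tau>)}
      \<le> measure_pmf.expectation (P M) (\<lambda>\<omega>. exp (t * card S * \<tau> - r * z) * exp (\<Sum>l\<in>{0..<M}. ?h (test_row \<omega> l)))"
  proof (rule prob_le_expectation[OF finite_set_gt_pmf])
    fix \<omega> assume A: "z \<le> real (card (zero_tests M Sd \<omega>)) \<and> (\<forall>k\<in>S. count M \<omega> k < \<tau>)"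
    have "(\<Sum>l\<in>{0..<M}. ?h (test_row \<omega> l)) = r * real (card (zero_tests M Sd \<omega>)) - t * (\<Sum>k\<in>S. count M \<omega> k)"
      by (simp add: card_zero_tests column_count_zero_tests sum_distrib_left sum_subtractf sum.swap[of _ S])
    moreover have "(\<Sum>k\<in>S. count M \<omega> k) \<le> card S * \<tau>"
      using A sum_mono[of S "count M \<omega>" "\<lambda>_. \<tau>"] by fastforce
    then have "t * (\<Sum>k\<in>S. count M \<omega> k) \<le> t * card S * \<tau>"
      using t by (simp add: mult_left_mono mult.assoc)
    moreover have "r * z \<le> r * real (card (zero_tests M Sd \<omega>))"
      using A \<open>0 \<le> r\<close> by (simp add: mult_left_mono)
    ultimately have "0 \<le> (t * card S * \<tau> - r * z) + (\<Sum>l\<in>{0..<M}. ?h (test_row \<omega> l))"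
      by linarith
    then show "1 \<le> exp (t * card S * \<tau> - r * z) * exp (\<Sum>l\<in>{0..<M}. ?h (test_row \<omega> l))"
      by (simp add: exp_add[symmetric])
  qed simp
  also have "\<dots> = exp (t * card S * \<tau> - r * z) * E_row (\<lambda>x. exp (?h x)) ^ M"
    using expectation_exp_sum_test_rows[of M N p u q ?h] by simp
  also have "E_row (\<lambda>x. exp (?h x)) = 1"
    using S r_tilt unfolding \<beta>_def by (rule expectation_tilted_row)
  finally show ?thesis unfolding r_def \<beta>_def by (simp add: algebra_simps)
qed

text \<open>A test is negative with probability neg_prob; among the negative tests, a non-defective
  item is expected to occur mean_count M times and a defective one (1 - gap) * mean_count M times,
  so gap is 1 - \<gamma>0.\<close>

definition neg_prob :: real where
  "neg_prob = (1 - p*(1-u))^card Sd * (1-q)"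

definition gap :: real where
  "gap = 1 - u / (1 - p*(1-u))"

definition mean_count :: "nat \<Rightarrow> real" where
  "mean_count M = real M * p * neg_prob"

lemma neg_prob_bounds: "0 \<le> neg_prob" "neg_prob \<le> 1"
proof -
  have "0 \<le> 1 - p*(1-u)" "1 - p*(1-u) \<le> 1" using p u by (auto intro: mult_le_one)
  then have "0 \<le> (1 - p*(1-u))^card Sd" "(1 - p*(1-u))^card Sd \<le> 1" by (auto intro: power_le_one)
  then show "0 \<le> neg_prob" "neg_prob \<le> 1" unfolding neg_prob_def using q by (auto intro: mult_le_one)
qed

lemma mean_count_nonneg: "0 \<le> mean_count M"
  unfolding mean_count_def using p neg_prob_bounds by simp

lemma gap_bounds:
  assumes "u < 1 - p*(1-u)"
  shows "0 < gap" "gap \<le> 1"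
  unfolding gap_def using assms u by (auto simp: divide_less_eq)

lemma prob_defective_count_high:
  assumes d: "d \<in> Sd" and u_small: "u < 1 - p*(1-u)"
  shows "measure_pmf.prob (P M) {\<omega>. (1 - gap/2) * mean_count M \<le> count M \<omega> d}
     \<le> exp (-(gap^2 * mean_count M / 16))"
proof -
  let ?a = "p*u*(1-p*(1-u))^(card Sd - 1)*(1-q)"
  have "measure_pmf.prob (P M) {\<omega>. (1 - gap/2) * mean_count M \<le> count M \<omega> d}
      \<le> exp (-(gap/4) * ((1 - gap/2) * mean_count M)) * (1 + (exp (gap/4) - 1) * ?a) ^ M"
    using gap_bounds[OF u_small] by (intro prob_count_ge_le[OF d]) simp
  also have "\<dots> \<le> exp (-(gap^2 * mean_count M / 16))"
  proof (rule chernoff_upper_exponent_le[OF mean_count_nonneg gap_bounds[OF u_small]])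
    define \<kappa> where "\<kappa> = 1 - p*(1-u)"
    have "0 < \<kappa>" using u_small u unfolding \<kappa>_def by linarith
    then show "0 \<le> ?a" using p u q unfolding \<kappa>_def[symmetric] by simp
    have "0 < card Sd" using d finite_Sd card_gt_0_iff by blast
    then have pow: "\<kappa>^card Sd = \<kappa> * \<kappa>^(card Sd - 1)" by (simp add: power_eq_if)
    have "(1 - gap) * mean_count M = (u/\<kappa>) * (real M * p * (\<kappa> * \<kappa>^(card Sd - 1) * (1-q)))"
      unfolding gap_def mean_count_def neg_prob_def \<kappa>_def[symmetric] pow by simp
    also have "\<dots> = real M * (p*u*\<kappa>^(card Sd - 1)*(1-q))"
      using \<open>0 < \<kappa>\<close> by (simp add: field_simps)
    finally show "real M * ?a = (1 - gap) * mean_count M" unfolding \<kappa>_def by simp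
  qed
  finally show ?thesis .
qed

lemma prob_few_zero_tests:
  assumes u_small: "u < 1 - p*(1-u)"
  shows "measure_pmf.prob (P M) {\<omega>. real (card (zero_tests M Sd \<omega>)) < (1 - gap/4) * (real M * neg_prob)}
     \<le> exp (-(gap^2 * mean_count M / 64))"
proof -
  have "measure_pmf.prob (P M) {\<omega>. real (card (zero_tests M Sd \<omega>)) < (1 - gap/4) * (real M * neg_prob)}
      \<le> exp ((gap/8) * ((1 - gap/4) * (real M * neg_prob))) * (1 + (exp (-(gap/8)) - 1) * neg_prob) ^ M"
    using gap_bounds[OF u_small] prob_card_zero_tests_lt_le[of "gap/8"] unfolding neg_prob_def by simp
  also have "\<dots> \<le> exp (-(gap^2 * mean_count M / 64))"
  proof (rule chernoff_lower_exponent_le[OF gap_bounds[OF u_small] neg_prob_bounds])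
    have "p * neg_prob \<le> neg_prob" using p neg_prob_bounds by (intro mult_left_le_one_le) auto
    then show "mean_count M \<le> real M * neg_prob"
      unfolding mean_count_def by (simp add: mult.assoc mult_left_mono)
  qed
  finally show ?thesis .
qed

lemma prob_nondefectives_all_low:
  assumes S: "S \<subseteq> {0..<N} - Sd" and u_small: "u < 1 - p*(1-u)"
  shows "measure_pmf.prob (P M) {\<omega>. (1 - gap/4) * (real M * neg_prob) \<le> real (card (zero_tests M Sd \<omega>))
                                  \<and> (\<forall>k\<in>S. count M \<omega> k < (1 - gap/2) * mean_count M)}
     \<le> exp (-(real (card S) * (gap^2 * mean_count M / 64)))"
proof -
  let ?z = "(1 - gap/4) * (real M * neg_prob)"
  have "measure_pmf.prob (P M) {\<omega>. ?z \<le> real (card (zero_tests M Sd \<omega>))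
                                  \<and> (\<forall>k\<in>S. count M \<omega> k < (1 - gap/2) * mean_count M)}
      \<le> exp (real (card S) * ((gap/8) * ((1 - gap/2) * mean_count M) + ?z * ln (1 - p + p * exp (-(gap/8)))))"
    using S gap_bounds[OF u_small] by (intro prob_low_counts_le) auto
  also have "\<dots> \<le> exp (real (card S) * (-(gap^2 * mean_count M / 64)))"
  proof -
    have "0 \<le> ?z" using gap_bounds[OF u_small] neg_prob_bounds by simp
    moreover have "p * ?z = (1 - gap/4) * mean_count M" unfolding mean_count_def by simp
    ultimately have "(gap/8) * ((1 - gap/2) * mean_count M) + ?z * ln (1 - p + p * exp (-(gap/8)))
        \<le> -(gap^2 * mean_count M / 64)"
      using gap_bounds[OF u_small] p by (intro chernoff_joint_exponent_le) auto
    then have "real (card S) * ((gap/8) * ((1 - gap/2) * mean_count M) + ?z * ln (1 - p + p * exp (-(gap/8))))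
        \<le> real (card S) * (-(gap^2 * mean_count M / 64))"
      by (rule mult_left_mono) simp
    then show ?thesis by simp
  qed
  finally show ?thesis by simp
qed

lemma prob_rolpal_failure_le:
  fixes M L :: nat
  assumes u_small: "u < 1 - p*(1-u)"
  defines "m \<equiv> (N - card Sd) - (L - 1)"
  shows "measure_pmf.prob (P M) {\<omega>. \<not> rolpal_success M N L Sd \<omega>}
     \<le> real (card Sd) * exp (-(gap^2 * mean_count M / 16)) + exp (-(gap^2 * mean_count M / 64))
       + real ((N - card Sd) choose m) * exp (-(real m * (gap^2 * mean_count M / 64)))"
proof -
  define \<tau> where "\<tau> = (1 - gap/2) * mean_count M"
  define z where "z = (1 - gap/4) * (real M * neg_prob)"
  define high where "high = (\<lambda>d. {\<omega>. \<tau> \<le> count M \<omega> d})"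
  define few where "few = {\<omega>. real (card (zero_tests M Sd \<omega>)) < z}"
  define low where "low = (\<lambda>S. {\<omega>. z \<le> real (card (zero_tests M Sd \<omega>)) \<and> (\<forall>k\<in>S. count M \<omega> k < \<tau>)})"
  define Subs where "Subs = {S. S \<subseteq> {0..<N} - Sd \<and> card S = m}"
  have fin_Subs: "finite Subs" unfolding Subs_def by (rule finite_subset[of _ "Pow {0..<N}"]) auto
  have card_Subs: "card Subs = (N - card Sd) choose m"
    unfolding Subs_def using n_subsets[of "{0..<N} - Sd" m] Sd by (simp add: card_Diff_subset finite_Sd)
  have "{\<omega>. \<not> rolpal_success M N L Sd \<omega>} \<subseteq> (\<Union>d\<in>Sd. high d) \<union> few \<union> (\<Union>S\<in>Subs. low S)"
  proof (rule subsetI, rule ccontr)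
    fix \<omega> assume fail: "\<omega> \<in> {\<omega>. \<not> rolpal_success M N L Sd \<omega>}"
      and "\<omega> \<notin> (\<Union>d\<in>Sd. high d) \<union> few \<union> (\<Union>S\<in>Subs. low S)"
    then have "\<forall>d\<in>Sd. count M \<omega> d < \<tau>" "z \<le> real (card (zero_tests M Sd \<omega>))"
      "\<forall>S\<in>Subs. \<omega> \<notin> low S"
      unfolding high_def few_def by auto
    then have "rolpal_success M N L Sd \<omega>"
      using Sd by (intro rolpal_success_if_separated) (auto simp: Subs_def low_def m_def not_less)
    then show False using fail by simp
  qed
  then have "measure_pmf.prob (P M) {\<omega>. \<not> rolpal_success M N L Sd \<omega>}
      \<le> measure_pmf.prob (P M) ((\<Union>d\<in>Sd. high d) \<union> few \<union> (\<Union>S\<in>Subs. low S))"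
    by (intro measure_pmf.finite_measure_mono) auto
  also have "\<dots> \<le> (\<Sum>d\<in>Sd. measure_pmf.prob (P M) (high d)) + measure_pmf.prob (P M) few
                 + (\<Sum>S\<in>Subs. measure_pmf.prob (P M) (low S))"
    using finite_Sd fin_Subs
    by (intro order_trans[OF measure_Un_le] add_mono order_refl
        measure_pmf.finite_measure_subadditive_finite) auto
  also have "\<dots> \<le> (\<Sum>d\<in>Sd. exp (-(gap^2 * mean_count M / 16))) + exp (-(gap^2 * mean_count M / 64))
                 + (\<Sum>S\<in>Subs. exp (-(real m * (gap^2 * mean_count M / 64))))"
    unfolding high_def few_def low_def \<tau>_def z_def
    using prob_defective_count_high[OF _ u_small] prob_few_zero_tests[OF u_small]
      prob_nondefectives_all_low[OF _ u_small]
    by (intro add_mono sum_mono) (auto simp: Subs_def)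
  finally show ?thesis using card_Subs by simp
qed

end

subsection \<open>Choice of the sample size\<close>

lemma union_bound_defectives_le_half:
  fixes c :: real assumes K: "2 \<le> K" and c: "0 \<le> c"
  shows "real K * exp (-(3*(1+c)) * ln (real K)) + exp (-(3*(1+c)) * ln (real K)) \<le> exp (-c * ln (real K)) / 2"
proof -
  define y where "y = ln (real K)"
  have K_exp: "real K = exp y" unfolding y_def using K by simp
  have y: "0 \<le> y" unfolding y_def using K by simp
  have sum_le: "real K * exp (-(3*(1+c))*y) + exp (-(3*(1+c))*y) \<le> 2 * (real K * exp (-(3*(1+c))*y))"
    using K by simp
  have "real K * exp (-(3*(1+c))*y) = exp (-c*y) * exp (-(2*(1+c))*y)"
    unfolding K_exp by (simp add: exp_add[symmetric] algebra_simps)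
  also have "\<dots> \<le> exp (-c*y) * exp (-2*y)"
    using y c mult_nonneg_nonneg[of c y] by (simp add: algebra_simps)
  also have "exp (-2*y) = 1 / real K ^ 2"
    unfolding K_exp by (simp add: exp_minus power2_eq_square exp_add[symmetric] field_simps)
  also have "exp (-c*y) * (1 / real K ^ 2) \<le> exp (-c*y) * (1/4)"
  proof -
    have "(2::real)^2 \<le> real K ^ 2" using K by (intro power_mono) auto
    then show ?thesis by (intro mult_left_mono) (auto simp: divide_le_eq)
  qed
  finally show ?thesis using sum_le unfolding y_def by linarith
qed

lemma union_bound_subsets_le_half:
  fixes c B C :: real assumes B: "2 \<le> B" and C: "0 \<le> C" "C \<le> B" and c: "0 \<le> c"
  shows "C * exp (-(2*(1+c)) * ln B) \<le> exp (-c * ln B) / 2"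
proof -
  define y where "y = ln B"
  have B_exp: "B = exp y" unfolding y_def using B by simp
  have y: "0 \<le> y" unfolding y_def using B by simp
  have "C * exp (-(2*(1+c))*y) \<le> B * exp (-(2*(1+c))*y)" using C by (intro mult_right_mono) auto
  also have "\<dots> = exp (-c*y) * exp (-(1+c)*y)"
    unfolding B_exp by (simp add: exp_add[symmetric] algebra_simps)
  also have "\<dots> \<le> exp (-c*y) * exp (-y)"
    using y c mult_nonneg_nonneg[of c y] by (simp add: algebra_simps)
  also have "exp (-y) = 1 / B" unfolding B_exp by (simp add: exp_minus divide_inverse)
  also have "exp (-c*y) * (1 / B) \<le> exp (-c*y) * (1/2)" using B by (intro mult_left_mono) (auto simp: field_simps)
  finally show ?thesis unfolding y_def by simp
qed

lemma failure_terms_lt: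
  fixes K m :: nat and B C c x :: real
  assumes K: "2 \<le> K" and B: "2 \<le> B" "0 \<le> C" "C \<le> B" and c: "0 \<le> c" and m: "1 \<le> m"
    and x: "(1 + c) * exp (-2) * (128 * exp 2 * ln B / real m + 192 * exp 2 * ln (real K)) \<le> x"
  shows "real K * exp (-(x/16)) + exp (-(x/64)) + C * exp (-(real m * (x/64)))
     < exp (-c * ln B) + exp (-c * ln (real K))"
proof -
  have ln: "0 \<le> ln B" "0 \<le> ln (real K)" using B K by simp_all
  have "192 * (1 + c) * ln (real K) = (1 + c) * exp (-2) * (192 * exp 2 * ln (real K))"
    by (simp add: exp_minus field_simps)
  also have "\<dots> \<le> (1 + c) * exp (-2) * (128 * exp 2 * ln B / real m + 192 * exp 2 * ln (real K))"
    using ln c by (intro mult_left_mono) auto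
  also note x
  finally have defectives: "3 * (1 + c) * ln (real K) \<le> x / 64" by linarith
  have "128 * (1 + c) * ln B = real m * ((1 + c) * exp (-2) * (128 * exp 2 * ln B / real m))"
    using m by (simp add: exp_minus field_simps)
  also have "\<dots> \<le> real m * ((1 + c) * exp (-2) * (128 * exp 2 * ln B / real m + 192 * exp 2 * ln (real K)))"
    using ln c by (intro mult_left_mono) auto
  also have "\<dots> \<le> real m * x" using x by (intro mult_left_mono) auto
  finally have subsets: "2 * (1 + c) * ln B \<le> real m * (x / 64)" by (simp add: algebra_simps)
  have "0 \<le> 3 * (1 + c) * ln (real K)" using ln(2) c by simp
  then have "0 \<le> x" using defectives by linarith
  have "exp (-(x/16)) \<le> exp (-(3*(1+c)) * ln (real K))" "exp (-(x/64)) \<le> exp (-(3*(1+c)) * ln (real K))"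
    unfolding exp_le_cancel_iff mult_minus_left using defectives \<open>0 \<le> x\<close> by linarith+
  then have "real K * exp (-(x/16)) + exp (-(x/64)) \<le> exp (-c * ln (real K)) / 2"
    using union_bound_defectives_le_half[OF K c] by (smt (verit) mult_left_mono of_nat_0_le_iff)
  moreover have "C * exp (-(real m * (x/64))) \<le> exp (-c * ln B) / 2"
  proof -
    have "exp (-(real m * (x/64))) \<le> exp (-(2*(1+c)) * ln B)"
      unfolding exp_le_cancel_iff mult_minus_left using subsets by linarith
    then have "C * exp (-(real m * (x/64))) \<le> C * exp (-(2*(1+c)) * ln B)"
      using B(2) by (rule mult_left_mono)
    then show ?thesis using union_bound_subsets_le_half[OF B c] by linarith
  qed
  moreover have "0 < exp (-c * ln B)" "0 < exp (-c * ln (real K))" by simp_all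
  ultimately show ?thesis by linarith
qed

lemma mean_count_lower_bound:
  fixes K M :: nat and u q \<delta> c X :: real
  assumes K: "2 \<le> K" and u: "u < 1/2" and q: "q < 1/2" and \<delta>: "0 < \<delta>" and c: "0 \<le> c" and X: "0 \<le> X"
    and M: "(1 + c) * (real K * (1 - u) / ((1 - q) * \<delta>^2)) * X \<le> real M"
  shows "(1 + c) * exp (-2) * X \<le> \<delta>^2 * (real M * (1 / ((1 - u) * real K)) * ((1 - 1 / real K)^K * (1 - q)))"
proof -
  define k where "k = (1 - 1 / real K)^K"
  define F where "F = k * (1 - q) / ((1 - u) * real K)"
  have "exp (-2) \<le> k" unfolding k_def by (rule exp_neg_two_le_one_minus_inverse_power[OF K])
  moreover from this have "0 < k" using exp_gt_zero[of "-2"] by linarith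
  then have "0 < F" unfolding F_def using q u K by (intro divide_pos_pos mult_pos_pos) auto
  ultimately have "(1 + c) * exp (-2) * X \<le> (1 + c) * k * X"
    using c X by (intro mult_right_mono mult_left_mono) auto
  also have "\<dots> = \<delta>^2 * (((1 + c) * (real K * (1 - u) / ((1 - q) * \<delta>^2)) * X) * F)"
  proof -
    have "d^2 * (((1 + c) * (Kr * b / (a * d^2)) * X) * (k * a / (b * Kr))) = (1 + c) * k * X"
      if "a \<noteq> 0" "b \<noteq> 0" "Kr \<noteq> 0" "d \<noteq> 0" for a b Kr d :: real
      using that by (simp add: field_simps power2_eq_square)
    then show ?thesis unfolding F_def by (rule sym) (use u q K \<delta> in auto)
  qed
  also have "\<dots> \<le> \<delta>^2 * (real M * F)"
    using M \<open>0 < F\<close> by (intro mult_left_mono mult_right_mono) auto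
  finally show ?thesis unfolding F_def k_def by simp
qed

lemma rolpal_success_prob_gt:
  fixes c0 u q :: real and N K L M :: nat and Sd :: "nat set"
  defines "p \<equiv> 1 / ((1 - u) * real K)"
    and "B \<equiv> real K * real ((N - K) choose (L - 1))"
  assumes c0: "0 < c0" and Sd_sub: "Sd \<subseteq> {0..<N}" and card_Sd: "card Sd = K" and K: "1 < K"
    and L: "1 \<le> L" "L \<le> N - K" and u_range: "0 \<le> u" "u < 1/2" and q_range: "0 \<le> q" "q < 1/2"
    and M: "(1 + c0) * (real K * (1 - u) / ((1 - q) * (1 - u / (1 - (1 - u) * p))^2)) *
              (128 * exp 2 * ln B / (real (N - K) - real (L - 1)) + 192 * exp 2 * ln (real K)) \<le> real M"
  shows "1 - exp (- c0 * ln B) - exp (- c0 * ln (real K))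
     < measure_pmf.prob (gt_pmf M N p u q) {\<omega>. rolpal_success M N L Sd \<omega>}"
proof -
  have K2: "2 \<le> K" using K by simp
  have kappa: "1 - p * (1 - u) = 1 - 1 / real K" unfolding p_def using u_range by simp
  have "p \<le> 1"
  proof -
    have "1/2 * 2 \<le> (1 - u) * real K" using u_range K2 by (intro mult_mono) auto
    then show ?thesis unfolding p_def by (simp add: divide_le_eq)
  qed
  then interpret group_testing N p u q Sd
    using u_range q_range Sd_sub unfolding p_def by unfold_locales auto
  have "u * real K < 1/2 * real K" using u_range K2 by (intro mult_strict_right_mono) auto
  then have "1 + u * real K < real K" using K2 by linarith
  then have u_small: "u < 1 - p * (1 - u)" unfolding kappa using K2 by (simp add: field_simps)
  define C where "C = (N - K) choose (L - 1)"
  define m where "m = (N - K) - (L - 1)"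
  have m: "real m = real (N - K) - real (L - 1)" "1 \<le> m" unfolding m_def using L by (simp_all add: of_nat_diff)
  have C_m: "C = (N - K) choose m" unfolding C_def m_def using L by (intro binomial_symmetric) simp
  have "1 \<le> real C" unfolding C_def using L by (simp add: Suc_leI)
  then have "2 * 1 \<le> real K * real C" "1 * real C \<le> real K * real C"
    using K2 by (intro mult_mono mult_right_mono; simp)+
  then have B: "2 \<le> B" "real C \<le> B" unfolding B_def C_def[symmetric] by simp_all
  define X where "X = 128 * exp 2 * ln B / real m + 192 * exp 2 * ln (real K)"
  have gap: "1 - u / (1 - (1 - u) * p) = gap" unfolding gap_def by (simp add: mult.commute)
  have "0 \<le> X" unfolding X_def using B(1) K2 by simp
  moreover have "(1 + c0) * (real K * (1 - u) / ((1 - q) * gap^2)) * X \<le> real M"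
    using M unfolding gap m(1)[symmetric] X_def[symmetric] .
  ultimately have mean: "(1 + c0) * exp (-2) * X \<le> gap^2 * mean_count M"
    using mean_count_lower_bound[OF K2 u_range(2) q_range(2) gap_bounds(1)[OF u_small]] c0
    unfolding mean_count_def neg_prob_def kappa card_Sd p_def[symmetric] by simp
  have "measure_pmf.prob (P M) {\<omega>. \<not> rolpal_success M N L Sd \<omega>}
      < exp (- c0 * ln B) + exp (- c0 * ln (real K))"
    using prob_rolpal_failure_le[OF u_small, of M L]
      failure_terms_lt[OF K2 B(1) _ B(2) _ m(2) mean[unfolded X_def]] c0
    unfolding card_Sd m_def[symmetric] C_m[symmetric] by simp
  moreover have "measure_pmf.prob (P M) {\<omega>. rolpal_success M N L Sd \<omega>}
      = 1 - measure_pmf.prob (P M) {\<omega>. \<not> rolpal_success M N L Sd \<omega>}"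
    using measure_pmf.prob_compl[of "{\<omega>. \<not> rolpal_success M N L Sd \<omega>}" "P M"]
    by (simp add: Compl_eq_Diff_UNIV[symmetric] Collect_neg_eq[symmetric])
  ultimately show ?thesis by simp
qed

theorem theorem2:
  fixes c0 :: real
  assumes "c0 > 0"
  shows "\<exists>Ca1 Ca2 :: real. Ca1 > 0 \<and> Ca2 > 0 \<and>
    (\<forall>(N::nat) (K::nat) (L::nat) (M::nat) (Sd::nat set) (u::real) (q::real).
       Sd \<subseteq> {0..<N} \<longrightarrow> card Sd = K \<longrightarrow> K > 1 \<longrightarrow> 1 \<le> L \<longrightarrow> L \<le> N - K \<longrightarrow>
       0 \<le> u \<longrightarrow> u < 1/2 \<longrightarrow> 0 \<le> q \<longrightarrow> q < 1/2 \<longrightarrow>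
       (let p = 1 / ((1 - u) * real K);
            \<gamma>0 = u / (1 - (1 - u) * p);
            B = real K * real ((N - K) choose (L - 1))
        in real M \<ge> (1 + c0) * (real K * (1 - u) / ((1 - q) * (1 - \<gamma>0)^2)) *
                 (Ca1 * ln B / (real (N - K) - real (L - 1)) + Ca2 * ln (real K))
           \<longrightarrow> measure_pmf.prob (gt_pmf M N p u q) {\<omega>. rolpal_success M N L Sd \<omega>}
                 > 1 - exp (- c0 * ln B) - exp (- c0 * ln (real K))))"
  unfolding Let_def
  by (intro exI[of _ "128 * exp (2::real)"] exI[of _ "192 * exp (2::real)"] conjI allI impI
      rolpal_success_prob_gt[OF assms]) simp_all

end
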